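(* Let $\alpha_0$ be the spectral abscissa of $F$ and let $\alpha_f(\sigma):=\sup_{\omega\in\mathbb{R}} f(\sigma+j\omega)$ for $\sigma\in(\alpha_0,\infty)$. Then $\alpha_f$ is strictly monotonically decreasing on $(\alpha_0,\infty)$.
   Context: Fix integers $n\ge 1$, $m\ge 0$, matrices $A_0,\dots,A_m\in\mathbb{C}^{n\times n}$, delays $\tau_0=0$ and $\tau_1,\dots,\tau_m\ge 0$, and weights $w_0,\dots,w_m>0$. Define the matrix function $F(\lambda)=\lambda I_n-\sum_{i=0}^m A_i e^{-\lambda\tau_i}$ for $\lambda\in\mathbb{C}$. The characteristic roots are the solutions of $\det F(\lambda)=0$; this set is nonempty, and every right half-plane $\{\Re\lambda\ge c\}$ contains only finitely many of them, so the spectral abscissa $\alpha_0=\sup\{\Re\lambda:\det F(\lambda)=0\}$ is a finite real number attained by some root. Define $w(\lambda)=\sum_{i=0}^m |e^{-\lambda\tau_i}|/w_i$ and, for $\lambda$ not a characteristic root, $f(\lambda)=w(\lambda)\,\sigma_{\max}(F(\lambda)^{-1})$, where $\sigma_{\max}$ denotes the largest singular value. *)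

theory Defs
  imports "HOL-Analysis.Analysis"
begin

definition charF :: "nat \<Rightarrow> (nat \<Rightarrow> complex^'n^'n) \<Rightarrow> (nat \<Rightarrow> real) \<Rightarrow> complex \<Rightarrow> complex^'n^'n" where
  "charF m A \<tau> z = mat z - (\<Sum>i\<le>m. mat (exp (- z * complex_of_real (\<tau> i))) ** A i)"

definition spec_abscissa :: "nat \<Rightarrow> (nat \<Rightarrow> complex^'n^'n) \<Rightarrow> (nat \<Rightarrow> real) \<Rightarrow> real" where
  "spec_abscissa m A \<tau> = Sup {Re z | z. det (charF m A \<tau> z) = 0}"

definition wfun :: "nat \<Rightarrow> (nat \<Rightarrow> real) \<Rightarrow> (nat \<Rightarrow> real) \<Rightarrow> complex \<Rightarrow> real" where
  "wfun m \<tau> wt z = (\<Sum>i\<le>m. cmod (exp (- z * complex_of_real (\<tau> i))) / wt i)"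

text \<open>Largest singular value = operator 2-norm (Euclidean norm on complex^'n).\<close>
definition sigma_max :: "complex^'n^'n \<Rightarrow> real" where
  "sigma_max M = onorm (\<lambda>x. M *v x)"

definition ffun :: "nat \<Rightarrow> (nat \<Rightarrow> complex^'n^'n) \<Rightarrow> (nat \<Rightarrow> real) \<Rightarrow> (nat \<Rightarrow> real) \<Rightarrow> complex \<Rightarrow> real" where
  "ffun m A \<tau> wt z = wfun m \<tau> wt z * sigma_max (matrix_inv (charF m A \<tau> z))"

definition alpha_f :: "nat \<Rightarrow> (nat \<Rightarrow> complex^'n^'n) \<Rightarrow> (nat \<Rightarrow> real) \<Rightarrow> (nat \<Rightarrow> real) \<Rightarrow> real \<Rightarrow> real" where
  "alpha_f m A \<tau> wt \<sigma> = (SUP \<omega>\<in>(UNIV::real set). ffun m A \<tau> wt (Complex \<sigma> \<omega>))"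

end

theory Submission
  imports Defs "HOL-Complex_Analysis.Complex_Analysis"
begin

(* To the right of the spectral abscissa, F(lambda) = lambda I - G(lambda) with ||G(lambda)||
   bounded on every half-plane Re lambda >= c, so the resolvent F(lambda)^-1 is holomorphic there,
   its norm decays like 1/|lambda|, and sigma_max(F^-1) attains its supremum on each vertical line.
   Let that supremum on Re lambda = sigma2 be attained at lambda2, let x be a unit vector with
   |F(lambda2)^-1 x| = sigma_max(F(lambda2)^-1), and put v = F(lambda2)^-1 x. The scalar function
   g(lambda) = v^* F(lambda)^-1 x is holomorphic, vanishes at infinity and has |g(lambda2)| = |v|^2 > 0,
   while |g| <= |v| sigma_max(F^-1) everywhere. By the maximum modulus principle on the half-plane
   Re lambda > sigma1, |g| exceeds |v|^2 somewhere on Re lambda = sigma1, and there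
   sigma_max(F^-1) > |v|. Since w(sigma + j omega) does not depend on omega and is nonincreasing in
   sigma, alpha_f(sigma2) < alpha_f(sigma1). *)

section \<open>Matrices and operator norms\<close>

lemma matrix_vector_mult_mat: "mat c *v x = c *s (x :: 'a::comm_semiring_1^'n)"
  by (vector matrix_vector_mult_def mat_def) (simp add: if_distrib if_distribR cong del: if_weak_cong)

lemma matrix_vector_mult_sum_rdistrib:
  "(\<Sum>i\<in>I. B i) *v x = (\<Sum>i\<in>I. B i *v (x :: 'a::comm_semiring_1^'n))"
  by (induction I rule: infinite_finite_induct) (auto simp: matrix_vector_mult_add_rdistrib)

lemma matrix_vector_mult_axis: "(B *v axis j 1) $ i = (B $ i $ j :: 'a::comm_semiring_1)"
  by (simp add: matrix_vector_mult_def axis_def if_distrib[where f = "(*) _"] cong: if_cong)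

lemma norm_vector_smult: "norm (c *s x) = norm c * norm (x :: 'a::real_normed_field^'n)"
  by (simp add: norm_vec_def L2_set_right_distrib norm_mult)

lemma cmod_sum_cnj_mult_le: "cmod (\<Sum>j\<in>UNIV. cnj (v $ j) * u $ j) \<le> norm v * norm (u :: complex^'n)"
proof -
  have "cmod (\<Sum>j\<in>UNIV. cnj (v $ j) * u $ j) \<le> (\<Sum>j\<in>UNIV. \<bar>cmod (v $ j)\<bar> * \<bar>cmod (u $ j)\<bar>)"
    by (rule order.trans[OF norm_sum]) (simp add: norm_mult)
  also have "\<dots> \<le> L2_set (\<lambda>j. cmod (v $ j)) UNIV * L2_set (\<lambda>j. cmod (u $ j)) UNIV"
    by (rule L2_set_mult_ineq)
  finally show ?thesis by (simp add: norm_vec_def)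
qed

lemma sum_cnj_mult_self: "(\<Sum>j\<in>UNIV. cnj (v $ j) * v $ j) = complex_of_real ((norm (v :: complex^'n))\<^sup>2)"
proof -
  have "(\<Sum>j\<in>UNIV. cnj (v $ j) * v $ j) = complex_of_real (\<Sum>j\<in>UNIV. (cmod (v $ j))\<^sup>2)"
    by (simp only: complex_norm_square mult.commute of_real_sum)
  also have "(\<Sum>j\<in>UNIV. (cmod (v $ j))\<^sup>2) = (norm v)\<^sup>2"
    by (simp add: norm_vec_def L2_set_def sum_nonneg)
  finally show ?thesis .
qed

lemma onorm_matrix_le_sum_norm_entries:
  fixes B :: "'a::real_normed_field^'n^'m"
  shows "onorm ((*v) B) \<le> (\<Sum>i\<in>UNIV. \<Sum>j\<in>UNIV. norm (B $ i $ j))"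
proof (rule onorm_le)
  fix x
  have "norm (B *v x) \<le> (\<Sum>i\<in>UNIV. norm ((B *v x) $ i))"
    by (simp add: norm_vec_def L2_set_le_sum)
  also have "\<dots> \<le> (\<Sum>i\<in>UNIV. \<Sum>j\<in>UNIV. norm (B $ i $ j) * norm x)"
  proof (rule sum_mono)
    fix i
    have "norm ((B *v x) $ i) \<le> (\<Sum>j\<in>UNIV. norm (B $ i $ j * x $ j))"
      unfolding matrix_vector_mult_def by (simp add: norm_sum)
    also have "\<dots> \<le> (\<Sum>j\<in>UNIV. norm (B $ i $ j) * norm x)"
      by (intro sum_mono) (simp add: norm_mult mult_left_mono Finite_Cartesian_Product.norm_nth_le)
    finally show "norm ((B *v x) $ i) \<le> (\<Sum>j\<in>UNIV. norm (B $ i $ j) * norm x)" .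
  qed
  finally show "norm (B *v x) \<le> (\<Sum>i\<in>UNIV. \<Sum>j\<in>UNIV. norm (B $ i $ j)) * norm x"
    by (simp add: sum_distrib_right)
qed

lemma sigma_max_lipschitz:
  "(real CARD('n) * real CARD('n))-lipschitz_on UNIV (sigma_max :: complex^'n^'n \<Rightarrow> real)"
proof (rule lipschitz_onI)
  have le: "sigma_max P \<le> sigma_max Q + real CARD('n) * real CARD('n) * dist P Q"
    for P Q :: "complex^'n^'n"
  proof -
    have "sigma_max P \<le> sigma_max Q + onorm ((*v) (P - Q))"
      unfolding sigma_max_def using onorm_triangle[of "(*v) Q" "(*v) (P - Q)"]
      by (simp add: matrix_vector_mult_diff_rdistrib)
    also have "onorm ((*v) (P - Q)) \<le> (\<Sum>i\<in>(UNIV::'n set). \<Sum>j\<in>(UNIV::'n set). dist P Q)"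
      unfolding dist_norm
      by (rule order.trans[OF onorm_matrix_le_sum_norm_entries])
         (intro sum_mono order.trans[OF Finite_Cartesian_Product.norm_nth_le Finite_Cartesian_Product.norm_nth_le])
    finally show ?thesis by simp
  qed
  show "dist (sigma_max P) (sigma_max Q) \<le> real CARD('n) * real CARD('n) * dist P Q"
    for P Q :: "complex^'n^'n"
    using le[of P Q] le[of Q P] by (simp add: dist_real_def dist_commute abs_le_iff)
qed simp

lemma onorm_attained:
  fixes f :: "'a::euclidean_space \<Rightarrow> 'b::real_normed_vector"
  assumes "linear f"
  obtains x where "norm x = 1" "onorm f = norm (f x)"
proof -
  have "sphere (0::'a) 1 \<noteq> {}"
    using norm_Basis[OF SOME_Basis] by (auto simp: sphere_def intro!: exI[of _ "SOME b. b \<in> Basis"])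
  moreover have "continuous_on (sphere 0 1) (\<lambda>x. norm (f x))"
    using linear_continuous_on[OF assms[unfolded linear_conv_bounded_linear]] by (intro continuous_intros)
  ultimately obtain x where "x \<in> sphere 0 1" and "\<And>y. y \<in> sphere 0 1 \<Longrightarrow> norm (f y) \<le> norm (f x)"
    using continuous_attains_sup[OF compact_sphere] by metis
  then have x: "norm x = 1" and max: "\<And>y. norm y = 1 \<Longrightarrow> norm (f y) \<le> norm (f x)"
    by simp_all
  have "onorm f \<le> norm (f x)"
  proof (rule onorm_le)
    fix y
    show "norm (f y) \<le> norm (f x) * norm y"
    proof (cases "y = 0")
      case False
      have "norm (f y) = norm y * norm (f (y /\<^sub>R norm y))"
        using False by (simp add: linear_cmul[OF assms])
      also have "\<dots> \<le> norm y * norm (f x)"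
        using False by (intro mult_left_mono max) auto
      finally show ?thesis by (simp add: mult.commute)
    qed (simp add: linear_0[OF assms])
  qed
  moreover have "norm (f x) \<le> onorm f"
    using onorm[OF assms[unfolded linear_conv_bounded_linear], of x] x by simp
  ultimately show thesis by (intro that[OF x(1)] antisym)
qed

lemma matrix_inv_mult:
  fixes B :: "'a::field^'n^'n"
  assumes "det B \<noteq> 0"
  shows "B ** matrix_inv B = mat 1" "matrix_inv B ** B = mat 1"
proof -
  have "\<exists>B'. B ** B' = mat 1 \<and> B' ** B = mat 1"
    using assms invertible_det_nz unfolding invertible_def by blast
  then have "B ** matrix_inv B = mat 1 \<and> matrix_inv B ** B = mat 1"
    unfolding matrix_inv_def by (rule someI_ex)
  then show "B ** matrix_inv B = mat 1" "matrix_inv B ** B = mat 1" by simp_all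
qed

lemma matrix_inv_entry:
  fixes B :: "'a::field^'n^'n"
  assumes "det B \<noteq> 0"
  shows "matrix_inv B $ i $ j = det (\<chi> k l. if l = i then axis j 1 $ k else B $ k $ l) / det B"
proof -
  have "B *v (matrix_inv B *v axis j 1) = axis j 1"
    by (simp add: matrix_vector_mul_assoc matrix_inv_mult[OF assms])
  with cramer[OF assms] have "(matrix_inv B *v axis j 1) $ i
      = det (\<chi> k l. if l = i then axis j 1 $ k else B $ k $ l) / det B"
    by simp
  then show ?thesis
    by (simp add: matrix_vector_mult_axis)
qed

lemma holomorphic_on_det:
  fixes M :: "complex \<Rightarrow> complex^'n^'n"
  assumes "\<And>i j. (\<lambda>z. M z $ i $ j) holomorphic_on S"
  shows "(\<lambda>z. det (M z)) holomorphic_on S"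
  unfolding det_def by (intro holomorphic_intros assms)

lemma holomorphic_on_matrix_inv_entry:
  fixes M :: "complex \<Rightarrow> complex^'n^'n"
  assumes "\<And>i j. (\<lambda>z. M z $ i $ j) holomorphic_on S" "\<And>z. z \<in> S \<Longrightarrow> det (M z) \<noteq> 0"
  shows "(\<lambda>z. matrix_inv (M z) $ i $ j) holomorphic_on S"
proof (rule holomorphic_transform)
  show "(\<lambda>z. det (\<chi> k l. if l = i then axis j 1 $ k else M z $ k $ l) / det (M z)) holomorphic_on S"
  proof (intro holomorphic_on_divide holomorphic_on_det)
    show "(\<lambda>z. (\<chi> k l. if l = i then axis j 1 $ k else M z $ k $ l) $ k $ l) holomorphic_on S" for k l
      by (cases "l = i") (simp_all add: assms)
  qed (use assms in auto)
qed (simp add: matrix_inv_entry assms)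

lemma sigma_max_matrix_inv_pos:
  fixes B :: "complex^'n^'n"
  assumes "det B \<noteq> 0"
  shows "sigma_max (matrix_inv B) > 0"
  unfolding sigma_max_def
proof (subst onorm_pos_lt)
  show "bounded_linear ((*v) (matrix_inv B))" by (rule matrix_vector_mul_bounded_linear)
  have "B *v (matrix_inv B *v axis i 1) \<noteq> 0" for i :: 'n
    by (simp add: matrix_vector_mul_assoc matrix_inv_mult[OF assms] axis_eq_0_iff)
  then show "\<not> (\<forall>x. matrix_inv B *v x = 0)" by fastforce
qed

lemma sigma_max_matrix_inv_le:
  fixes B :: "complex^'n^'n"
  assumes "c > 0" and lower: "\<And>x. c * norm x \<le> norm (B *v x)"
  shows "det B \<noteq> 0" "sigma_max (matrix_inv B) \<le> 1 / c"
proof -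
  have "inj ((*v) B)"
  proof (rule injI)
    fix x y assume "B *v x = B *v y"
    then have "c * norm (x - y) \<le> 0"
      using lower[of "x - y"] by (simp add: matrix_vector_mult_diff_distrib)
    then show "x = y" using \<open>c > 0\<close> by (simp add: mult_le_0_iff)
  qed
  then show det: "det B \<noteq> 0"
    using det_nz_iff_inj_gen[OF matrix_vector_mul_linear_gen, of B] by simp
  show "sigma_max (matrix_inv B) \<le> 1 / c"
    unfolding sigma_max_def
  proof (rule onorm_le)
    fix y
    have "c * norm (matrix_inv B *v y) \<le> norm y"
      using lower[of "matrix_inv B *v y"] by (simp add: matrix_vector_mul_assoc matrix_inv_mult[OF det])
    then show "norm (matrix_inv B *v y) \<le> 1 / c * norm y"
      using \<open>c > 0\<close> by (simp add: field_simps)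
  qed
qed

section \<open>Maximum modulus on a half-plane\<close>

lemma continuous_real_attains_sup_coercive:
  fixes \<psi> :: "real \<Rightarrow> real"
  assumes "continuous_on UNIV \<psi>" and "\<And>\<omega>. R \<le> \<bar>\<omega>\<bar> \<Longrightarrow> \<psi> \<omega> \<le> \<psi> 0"
  obtains w where "\<And>\<omega>. \<psi> \<omega> \<le> \<psi> w"
proof -
  have "{-\<bar>R\<bar>..\<bar>R\<bar>} \<noteq> {}" by simp
  then obtain w where max: "\<And>y. y \<in> {-\<bar>R\<bar>..\<bar>R\<bar>} \<Longrightarrow> \<psi> y \<le> \<psi> w"
    using continuous_attains_sup[OF compact_Icc _ continuous_on_subset[OF assms(1)]] by blast
  have "\<psi> \<omega> \<le> \<psi> w" for \<omega>
  proof (cases "\<bar>\<omega>\<bar> \<le> \<bar>R\<bar>")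
    case True
    then show ?thesis using max by (simp add: abs_le_iff)
  next
    case False
    then have "\<psi> \<omega> \<le> \<psi> 0" by (intro assms(2)) linarith
    also have "\<psi> 0 \<le> \<psi> w" by (rule max) simp
    finally show ?thesis .
  qed
  then show thesis by (rule that)
qed

lemma half_plane_modulus_le_boundary:
  fixes g :: "complex \<Rightarrow> complex"
  assumes hol: "g holomorphic_on {z. \<sigma>0 < Re z}" and "\<sigma>0 < \<sigma>" and "0 < M"
    and vanish: "\<And>e. 0 < e \<Longrightarrow> \<exists>R. \<forall>z. \<sigma> \<le> Re z \<longrightarrow> R \<le> cmod z \<longrightarrow> cmod (g z) < e"
    and boundary: "\<And>z. Re z = \<sigma> \<Longrightarrow> cmod (g z) \<le> M"
    and "\<sigma> < Re z"
  shows "cmod (g z) \<le> M"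
proof -
  obtain R where R: "\<And>w. \<sigma> \<le> Re w \<Longrightarrow> R \<le> cmod w \<Longrightarrow> cmod (g w) < M"
    using vanish[OF \<open>0 < M\<close>] by blast
  define r where "r = max R (cmod z + 1)"
  define T where "T = {w. \<sigma> < Re w} \<inter> ball 0 r"
  have "open T" unfolding T_def by (intro open_Int open_halfspace_Re_gt open_ball)
  have closure_T: "closure T \<subseteq> {w. \<sigma> \<le> Re w} \<inter> cball 0 r"
    unfolding T_def by (rule closure_minimal) (auto intro: closed_Int closed_halfspace_Re_ge)
  show ?thesis
  proof (rule maximum_modulus_frontier[of g T])
    show "g holomorphic_on interior T"
      using hol \<open>\<sigma>0 < \<sigma>\<close> interior_open[OF \<open>open T\<close>]
      by (auto simp: T_def intro: holomorphic_on_subset)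
    show "continuous_on (closure T) g"
      using holomorphic_on_imp_continuous_on[OF hol] closure_T \<open>\<sigma>0 < \<sigma>\<close>
      by (elim continuous_on_subset) auto
    show "bounded T" unfolding T_def by (intro bounded_Int) simp
    show "z \<in> T" using \<open>\<sigma> < Re z\<close> by (simp add: T_def r_def)
  next
    fix w assume "w \<in> frontier T"
    then have w: "w \<in> closure T" "w \<notin> T"
      using interior_open[OF \<open>open T\<close>] by (auto simp: frontier_def)
    show "cmod (g w) \<le> M"
    proof (cases "Re w = \<sigma>")
      case False
      with w closure_T have "\<sigma> \<le> Re w" "R \<le> cmod w"
        by (auto simp: T_def r_def)
      then show ?thesis using R by fastforce
    qed (rule boundary)
  qed
qed

lemma half_plane_maximum_modulus_strict:
  fixes g :: "complex \<Rightarrow> complex"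
  assumes hol: "g holomorphic_on {z. \<sigma>0 < Re z}" and "\<sigma>0 < \<sigma>"
    and vanish: "\<And>e. 0 < e \<Longrightarrow> \<exists>R. \<forall>z. \<sigma> \<le> Re z \<longrightarrow> R \<le> cmod z \<longrightarrow> cmod (g z) < e"
    and "\<sigma> < Re z0" and "g z0 \<noteq> 0"
  shows "\<exists>z. Re z = \<sigma> \<and> cmod (g z0) < cmod (g z)"
proof (rule ccontr)
  assume "\<nexists>z. Re z = \<sigma> \<and> cmod (g z0) < cmod (g z)"
  then have boundary: "\<And>z. Re z = \<sigma> \<Longrightarrow> cmod (g z) \<le> cmod (g z0)"
    by (auto simp: not_less)
  let ?S = "{z. \<sigma> < Re z}"
  have "g constant_on ?S"
  proof (rule maximum_modulus_principle[of g ?S ?S z0])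
    show "g holomorphic_on ?S"
      using \<open>\<sigma>0 < \<sigma>\<close> by (intro holomorphic_on_subset[OF hol]) auto
    show "cmod (g z) \<le> cmod (g z0)" if "z \<in> ?S" for z
      using that \<open>g z0 \<noteq> 0\<close>
      by (intro half_plane_modulus_le_boundary[OF hol \<open>\<sigma>0 < \<sigma>\<close> _ vanish boundary]) auto
  qed (use \<open>\<sigma> < Re z0\<close> in \<open>auto simp: open_halfspace_Re_gt connected_halfspace_Re_gt\<close>)
  then have const: "g z = g z0" if "\<sigma> < Re z" for z
    using that \<open>\<sigma> < Re z0\<close> unfolding constant_on_def by force
  obtain R where R: "\<And>z. \<sigma> \<le> Re z \<Longrightarrow> R \<le> cmod z \<Longrightarrow> cmod (g z) < cmod (g z0)"
    using vanish[of "cmod (g z0)"] \<open>g z0 \<noteq> 0\<close> by auto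
  define a where "a = max (\<bar>\<sigma>\<bar> + 1) \<bar>R\<bar>"
  have "cmod (g (complex_of_real a)) < cmod (g z0)" by (rule R) (auto simp: a_def)
  moreover have "g (complex_of_real a) = g z0" by (rule const) (auto simp: a_def)
  ultimately show False by simp
qed

section \<open>The characteristic matrix and its resolvent\<close>

lemma charF_mult_vector:
  "charF m A \<tau> z *v x = z *s x - (\<Sum>i\<le>m. exp (- z * complex_of_real (\<tau> i)) *s (A i *v x))"
  by (simp add: charF_def matrix_vector_mult_diff_rdistrib matrix_vector_mult_sum_rdistrib
      matrix_vector_mult_mat matrix_vector_mul_assoc[symmetric])

lemma charF_entry:
  "charF m A \<tau> z $ i $ j =
     (if i = j then z else 0) - (\<Sum>l\<le>m. exp (- z * complex_of_real (\<tau> l)) * (A l $ i $ j))"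
proof -
  have "charF m A \<tau> z $ i $ j = (charF m A \<tau> z *v axis j 1) $ i"
    by (simp add: matrix_vector_mult_axis)
  then show ?thesis
    by (simp add: charF_mult_vector matrix_vector_mult_axis) (simp add: axis_def)
qed

definition delay_bound :: "nat \<Rightarrow> (nat \<Rightarrow> complex^'n^'n) \<Rightarrow> (nat \<Rightarrow> real) \<Rightarrow> real \<Rightarrow> real" where
  "delay_bound m A \<tau> c = (\<Sum>i\<le>m. exp (- c * \<tau> i) * sigma_max (A i))"

definition resolvent_norm :: "nat \<Rightarrow> (nat \<Rightarrow> complex^'n^'n) \<Rightarrow> (nat \<Rightarrow> real) \<Rightarrow> complex \<Rightarrow> real" where
  "resolvent_norm m A \<tau> z = sigma_max (matrix_inv (charF m A \<tau> z))"

lemma norm_delay_sum_le: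
  assumes "\<forall>i\<le>m. 0 \<le> \<tau> i" and "c \<le> Re z"
  shows "norm (\<Sum>i\<le>m. exp (- z * complex_of_real (\<tau> i)) *s (A i *v x)) \<le> delay_bound m A \<tau> c * norm x"
proof -
  have "norm (\<Sum>i\<le>m. exp (- z * complex_of_real (\<tau> i)) *s (A i *v x))
      \<le> (\<Sum>i\<le>m. exp (- Re z * \<tau> i) * norm (A i *v x))"
    by (rule order.trans[OF norm_sum]) (simp add: norm_vector_smult)
  also have "\<dots> \<le> (\<Sum>i\<le>m. exp (- c * \<tau> i) * (sigma_max (A i) * norm x))"
  proof (intro sum_mono mult_mono)
    show "exp (- Re z * \<tau> i) \<le> exp (- c * \<tau> i)" if "i \<in> {..m}" for i
      using that assms by (simp add: mult_right_mono)
    show "norm (A i *v x) \<le> sigma_max (A i) * norm x" for i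
      unfolding sigma_max_def by (rule onorm[OF matrix_vector_mul_bounded_linear])
  qed auto
  finally show ?thesis
    by (simp add: delay_bound_def sum_distrib_right mult.assoc)
qed

lemma norm_charF_mult_vector_ge:
  assumes "\<forall>i\<le>m. 0 \<le> \<tau> i" and "c \<le> Re z"
  shows "(cmod z - delay_bound m A \<tau> c) * norm x \<le> norm (charF m A \<tau> z *v x)"
  using norm_triangle_ineq2[of "z *s x" "\<Sum>i\<le>m. exp (- z * complex_of_real (\<tau> i)) *s (A i *v x)"]
    norm_delay_sum_le[OF assms, of A x]
  by (simp add: charF_mult_vector norm_vector_smult left_diff_distrib)

lemma charF_resolvent_bound:
  assumes "\<forall>i\<le>m. 0 \<le> \<tau> i" and "c \<le> Re z" and "delay_bound m A \<tau> c < cmod z"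
  shows "det (charF m A \<tau> z) \<noteq> 0"
    and "resolvent_norm m A \<tau> z \<le> 1 / (cmod z - delay_bound m A \<tau> c)"
proof -
  have pos: "0 < cmod z - delay_bound m A \<tau> c" using assms(3) by simp
  note lower = norm_charF_mult_vector_ge[OF assms(1,2), of A]
  show "det (charF m A \<tau> z) \<noteq> 0"
    by (rule sigma_max_matrix_inv_le(1)[OF pos lower])
  show "resolvent_norm m A \<tau> z \<le> 1 / (cmod z - delay_bound m A \<tau> c)"
    unfolding resolvent_norm_def by (rule sigma_max_matrix_inv_le(2)[OF pos lower])
qed

lemma resolvent_norm_vanishes_at_infinity:
  assumes "\<forall>i\<le>m. 0 \<le> \<tau> i" and "0 < e"
  obtains R where "\<And>z. c \<le> Re z \<Longrightarrow> R \<le> cmod z \<Longrightarrow> resolvent_norm m A \<tau> z < e"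
proof
  fix z assume z: "c \<le> Re z" "delay_bound m A \<tau> c + 2 / e \<le> cmod z"
  have "0 < 2 / e" using \<open>0 < e\<close> by simp
  with z have gap: "2 / e \<le> cmod z - delay_bound m A \<tau> c" "delay_bound m A \<tau> c < cmod z"
    by linarith+
  have "resolvent_norm m A \<tau> z \<le> 1 / (cmod z - delay_bound m A \<tau> c)"
    by (rule charF_resolvent_bound(2)[OF assms(1) z(1) gap(2)])
  also have "\<dots> \<le> 1 / (2 / e)"
    using gap \<open>0 < 2 / e\<close> by (intro divide_left_mono mult_pos_pos) linarith+
  also have "\<dots> < e" using \<open>0 < e\<close> by simp
  finally show "resolvent_norm m A \<tau> z < e" .
qed

lemma det_charF_nonzero:
  assumes "\<forall>i\<le>m. 0 \<le> \<tau> i" and "spec_abscissa m A \<tau> < Re z"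
  shows "det (charF m A \<tau> z) \<noteq> 0"
proof
  let ?roots = "{Re w | w. det (charF m A \<tau> w) = 0}"
  assume "det (charF m A \<tau> z) = 0"
  then have "Re z \<in> ?roots" by blast
  moreover have "bdd_above ?roots"
  proof (rule bdd_aboveI)
    fix r assume "r \<in> ?roots"
    then obtain w where w: "r = Re w" "det (charF m A \<tau> w) = 0" by blast
    show "r \<le> max 0 (delay_bound m A \<tau> 0)"
    proof (cases "0 \<le> Re w")
      case True
      then have "cmod w \<le> delay_bound m A \<tau> 0"
        using charF_resolvent_bound(1)[OF assms(1) True, where A = A] w(2) by (meson not_le)
      then show ?thesis using w(1) complex_Re_le_cmod[of w] by linarith
    qed (use w in auto)
  qed
  ultimately have "Re z \<le> spec_abscissa m A \<tau>"
    unfolding spec_abscissa_def by (rule cSup_upper)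
  with assms(2) show False by linarith
qed

lemma holomorphic_on_charF_entry: "(\<lambda>z. charF m A \<tau> z $ i $ j) holomorphic_on S"
  unfolding charF_entry by (cases "i = j") (auto intro!: holomorphic_intros)

lemma holomorphic_on_resolvent_entry:
  assumes "\<forall>i\<le>m. 0 \<le> \<tau> i" and "\<And>z. z \<in> S \<Longrightarrow> spec_abscissa m A \<tau> < Re z"
  shows "(\<lambda>z. matrix_inv (charF m A \<tau> z) $ i $ j) holomorphic_on S"
  by (intro holomorphic_on_matrix_inv_entry holomorphic_on_charF_entry det_charF_nonzero assms)

lemma continuous_on_resolvent_norm:
  assumes "\<forall>i\<le>m. 0 \<le> \<tau> i" and "\<And>z. z \<in> S \<Longrightarrow> spec_abscissa m A \<tau> < Re z"
  shows "continuous_on S (resolvent_norm m A \<tau>)"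
proof -
  have "continuous_on S (\<lambda>z. \<chi> i j. matrix_inv (charF m A \<tau> z) $ i $ j)"
    using holomorphic_on_imp_continuous_on[OF holomorphic_on_resolvent_entry[OF assms]]
    by (intro continuous_on_vec_lambda)
  then have "continuous_on S (\<lambda>z. matrix_inv (charF m A \<tau> z))" by simp
  then show ?thesis
    unfolding resolvent_norm_def
    using continuous_on_compose2[OF lipschitz_on_continuous_on[OF sigma_max_lipschitz]] by blast
qed

lemma resolvent_norm_pos:
  assumes "\<forall>i\<le>m. 0 \<le> \<tau> i" and "spec_abscissa m A \<tau> < Re z"
  shows "0 < resolvent_norm m A \<tau> z"
  unfolding resolvent_norm_def by (rule sigma_max_matrix_inv_pos[OF det_charF_nonzero[OF assms]])

lemma resolvent_norm_line_attains_max: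
  assumes \<tau>: "\<forall>i\<le>m. 0 \<le> \<tau> i" and "spec_abscissa m A \<tau> < \<sigma>"
  obtains w where "\<And>\<omega>. resolvent_norm m A \<tau> (Complex \<sigma> \<omega>) \<le> resolvent_norm m A \<tau> (Complex \<sigma> w)"
proof -
  let ?\<psi> = "\<lambda>\<omega>. resolvent_norm m A \<tau> (Complex \<sigma> \<omega>)"
  have "continuous_on {z. Re z = \<sigma>} (resolvent_norm m A \<tau>)"
    by (rule continuous_on_resolvent_norm[OF \<tau>]) (use assms(2) in auto)
  moreover have "continuous_on UNIV (\<lambda>\<omega>. Complex \<sigma> \<omega>)"
    unfolding Complex_eq by (intro continuous_intros)
  ultimately have "continuous_on UNIV ?\<psi>"
    by (rule continuous_on_compose2) auto
  moreover have "0 < ?\<psi> 0" using assms(2) by (intro resolvent_norm_pos[OF \<tau>]) simp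
  then obtain R where R: "\<And>z. \<sigma> \<le> Re z \<Longrightarrow> R \<le> cmod z \<Longrightarrow> resolvent_norm m A \<tau> z < ?\<psi> 0"
    using resolvent_norm_vanishes_at_infinity[OF \<tau>, where c = \<sigma> and A = A] by blast
  have "?\<psi> \<omega> \<le> ?\<psi> 0" if "R \<le> \<bar>\<omega>\<bar>" for \<omega>
    using R[of "Complex \<sigma> \<omega>"] that abs_Im_le_cmod[of "Complex \<sigma> \<omega>"] by simp
  ultimately show thesis
    using continuous_real_attains_sup_coercive that by blast
qed

lemma resolvent_norm_scalar_witness:
  assumes \<tau>: "\<forall>i\<le>m. 0 \<le> \<tau> i" and "spec_abscissa m A \<tau> \<le> \<sigma>0"
  obtains g where "g holomorphic_on {z. \<sigma>0 < Re z}"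
    and "\<And>z. cmod (g z) \<le> resolvent_norm m A \<tau> z0 * resolvent_norm m A \<tau> z"
    and "cmod (g z0) = (resolvent_norm m A \<tau> z0)\<^sup>2"
proof -
  let ?R = "\<lambda>z. matrix_inv (charF m A \<tau> z)"
  let ?\<phi> = "resolvent_norm m A \<tau>"
  obtain x where x: "norm x = 1" "?\<phi> z0 = norm (?R z0 *v x)"
    using onorm_attained[OF matrix_vector_mul_linear] unfolding resolvent_norm_def sigma_max_def by metis
  define v where "v = ?R z0 *v x"
  define g where "g z = (\<Sum>j\<in>UNIV. cnj (v $ j) * (?R z *v x) $ j)" for z
  show thesis
  proof
    show "g holomorphic_on {z. \<sigma>0 < Re z}"
      unfolding g_def matrix_vector_mult_def
      using \<open>spec_abscissa m A \<tau> \<le> \<sigma>0\<close>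
      by (auto intro!: holomorphic_intros holomorphic_on_resolvent_entry[OF \<tau>])
    show "cmod (g z) \<le> ?\<phi> z0 * ?\<phi> z" for z
    proof -
      have "cmod (g z) \<le> norm v * norm (?R z *v x)"
        unfolding g_def by (rule cmod_sum_cnj_mult_le)
      also have "norm (?R z *v x) \<le> ?\<phi> z"
        using onorm[OF matrix_vector_mul_bounded_linear, of "?R z" x] x(1)
        by (simp add: resolvent_norm_def sigma_max_def)
      finally show ?thesis using x(2) by (simp add: v_def mult_left_mono)
    qed
    show "cmod (g z0) = (?\<phi> z0)\<^sup>2"
      using sum_cnj_mult_self[of v] x(2) by (simp add: g_def v_def norm_power)
  qed
qed

lemma resolvent_norm_exceeded_on_line:
  assumes \<tau>: "\<forall>i\<le>m. 0 \<le> \<tau> i" and "spec_abscissa m A \<tau> < \<sigma>" and "\<sigma> < Re z0"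
  obtains \<omega> where "resolvent_norm m A \<tau> z0 < resolvent_norm m A \<tau> (Complex \<sigma> \<omega>)"
proof -
  let ?\<phi> = "resolvent_norm m A \<tau>"
  define \<sigma>0 where "\<sigma>0 = (spec_abscissa m A \<tau> + \<sigma>) / 2"
  have "spec_abscissa m A \<tau> \<le> \<sigma>0" "\<sigma>0 < \<sigma>" using assms(2) by (simp_all add: \<sigma>0_def)
  obtain g where hol: "g holomorphic_on {z. \<sigma>0 < Re z}"
    and g_le: "\<And>z. cmod (g z) \<le> ?\<phi> z0 * ?\<phi> z" and g_z0: "cmod (g z0) = (?\<phi> z0)\<^sup>2"
    using resolvent_norm_scalar_witness[OF \<tau> \<open>spec_abscissa m A \<tau> \<le> \<sigma>0\<close>] by blast
  have pos: "0 < ?\<phi> z0" using assms(2,3) by (intro resolvent_norm_pos[OF \<tau>]) simp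
  have vanish: "\<exists>R. \<forall>z. \<sigma> \<le> Re z \<longrightarrow> R \<le> cmod z \<longrightarrow> cmod (g z) < e" if "0 < e" for e
  proof -
    obtain R where R: "\<And>z. \<sigma> \<le> Re z \<Longrightarrow> R \<le> cmod z \<Longrightarrow> ?\<phi> z < e / ?\<phi> z0"
      using resolvent_norm_vanishes_at_infinity[OF \<tau> divide_pos_pos[OF \<open>0 < e\<close> pos], where c = \<sigma> and A = A]
      by blast
    have "cmod (g z) < e" if "\<sigma> \<le> Re z" "R \<le> cmod z" for z
      using g_le[of z] mult_strict_left_mono[OF R[OF that] pos] pos by simp
    then show ?thesis by blast
  qed
  moreover have "g z0 \<noteq> 0" using g_z0 pos by auto
  ultimately obtain z where "Re z = \<sigma>" "cmod (g z0) < cmod (g z)"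
    using half_plane_maximum_modulus_strict[OF hol \<open>\<sigma>0 < \<sigma>\<close> _ assms(3)] by blast
  then have "?\<phi> z0 * ?\<phi> z0 < ?\<phi> z0 * ?\<phi> z"
    using g_le[of z] g_z0 by (simp add: power2_eq_square)
  then have "?\<phi> z0 < ?\<phi> z" using pos by simp
  moreover have "z = Complex \<sigma> (Im z)" using \<open>Re z = \<sigma>\<close> by (simp add: complex_eq_iff)
  ultimately show thesis using that by metis
qed

section \<open>Monotonicity of the weighted abscissa function\<close>

lemma wfun_pos:
  assumes "\<forall>i\<le>m. 0 < wt i"
  shows "0 < wfun m \<tau> wt z"
  unfolding wfun_def using assms by (intro sum_pos) auto

lemma wfun_antimono:
  assumes "\<forall>i\<le>m. 0 \<le> \<tau> i" and "\<forall>i\<le>m. 0 < wt i" and "Re z1 \<le> Re z2"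
  shows "wfun m \<tau> wt z2 \<le> wfun m \<tau> wt z1"
  unfolding wfun_def using assms by (intro sum_mono divide_right_mono) (auto intro: mult_right_mono)

lemma alpha_f_eq_line_max:
  assumes "\<forall>i\<le>m. 0 < wt i"
    and max: "\<And>\<omega>. resolvent_norm m A \<tau> (Complex \<sigma> \<omega>) \<le> resolvent_norm m A \<tau> (Complex \<sigma> w)"
  shows "alpha_f m A \<tau> wt \<sigma> = wfun m \<tau> wt (Complex \<sigma> w) * resolvent_norm m A \<tau> (Complex \<sigma> w)"
proof -
  have same_weight: "wfun m \<tau> wt (Complex \<sigma> \<omega>) = wfun m \<tau> wt (Complex \<sigma> w)" for \<omega>
    by (simp add: wfun_def)
  show ?thesis
    unfolding alpha_f_def
  proof (rule cSup_eq_maximum)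
    fix y assume "y \<in> range (\<lambda>\<omega>. ffun m A \<tau> wt (Complex \<sigma> \<omega>))"
    then obtain \<omega> where "y = ffun m A \<tau> wt (Complex \<sigma> \<omega>)" by blast
    then have "y = wfun m \<tau> wt (Complex \<sigma> w) * resolvent_norm m A \<tau> (Complex \<sigma> \<omega>)"
      by (simp add: ffun_def resolvent_norm_def same_weight[of \<omega>])
    then show "y \<le> wfun m \<tau> wt (Complex \<sigma> w) * resolvent_norm m A \<tau> (Complex \<sigma> w)"
      using max[of \<omega>] wfun_pos[OF assms(1)] by (simp add: mult_left_mono less_imp_le)
  qed (auto simp: ffun_def resolvent_norm_def)
qed

theorem proposition1:
  fixes m :: nat and A :: "nat \<Rightarrow> complex^'n^'n" and \<tau> wt :: "nat \<Rightarrow> real"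
  assumes "\<tau> 0 = 0"
    and "\<forall>i\<le>m. \<tau> i \<ge> 0"
    and "\<forall>i\<le>m. wt i > 0"
  shows "\<forall>\<sigma>1 \<sigma>2. spec_abscissa m A \<tau> < \<sigma>1 \<longrightarrow> \<sigma>1 < \<sigma>2 \<longrightarrow>
           alpha_f m A \<tau> wt \<sigma>2 < alpha_f m A \<tau> wt \<sigma>1"
proof (intro allI impI)
  fix \<sigma>1 \<sigma>2 assume \<sigma>1: "spec_abscissa m A \<tau> < \<sigma>1" and "\<sigma>1 < \<sigma>2"
  let ?\<phi> = "resolvent_norm m A \<tau>" and ?w = "wfun m \<tau> wt"
  obtain w1 where max1: "\<And>\<omega>. ?\<phi> (Complex \<sigma>1 \<omega>) \<le> ?\<phi> (Complex \<sigma>1 w1)"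
    using resolvent_norm_line_attains_max[OF assms(2) \<sigma>1] by blast
  obtain w2 where max2: "\<And>\<omega>. ?\<phi> (Complex \<sigma>2 \<omega>) \<le> ?\<phi> (Complex \<sigma>2 w2)"
    using resolvent_norm_line_attains_max[OF assms(2)] \<sigma>1 \<open>\<sigma>1 < \<sigma>2\<close> by (metis less_trans)
  obtain \<omega> where \<omega>: "?\<phi> (Complex \<sigma>2 w2) < ?\<phi> (Complex \<sigma>1 \<omega>)"
    using resolvent_norm_exceeded_on_line[OF assms(2) \<sigma>1, of "Complex \<sigma>2 w2"] \<open>\<sigma>1 < \<sigma>2\<close> by auto
  have "alpha_f m A \<tau> wt \<sigma>2 = ?w (Complex \<sigma>2 w2) * ?\<phi> (Complex \<sigma>2 w2)"
    by (rule alpha_f_eq_line_max[OF assms(3) max2])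
  also have "\<dots> \<le> ?w (Complex \<sigma>1 w1) * ?\<phi> (Complex \<sigma>2 w2)"
    using wfun_antimono[OF assms(2,3)] \<open>\<sigma>1 < \<sigma>2\<close>
    by (intro mult_right_mono) (auto simp: resolvent_norm_def sigma_max_def onorm_pos_le)
  also have "\<dots> < ?w (Complex \<sigma>1 w1) * ?\<phi> (Complex \<sigma>1 \<omega>)"
    using \<omega> wfun_pos[OF assms(3)] by simp
  also have "\<dots> \<le> ?w (Complex \<sigma>1 w1) * ?\<phi> (Complex \<sigma>1 w1)"
    using max1 wfun_pos[OF assms(3)] by (simp add: less_imp_le)
  also have "\<dots> = alpha_f m A \<tau> wt \<sigma>1"
    by (rule alpha_f_eq_line_max[OF assms(3) max1, symmetric])
  finally show "alpha_f m A \<tau> wt \<sigma>2 < alpha_f m A \<tau> wt \<sigma>1" .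
qed

end
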